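(* Let $Q$ be a subring of $\mathbb{R}$ containing $1$, let $R = Q \times Q$ with coordinatewise addition and multiplication $(a,b)\cdot(c,d) = (ac, ad + bc)$, and consider the Frobenius template $(A(Q), C(Q), U(Q))$ in $R$, where $A(Q) = (Q \cap (0,\infty)) \times (Q \cap [0,\infty))$ and $C(Q) = U(Q) = (Q \cap [0,\infty))^2$. Let $n$ be a positive integer and let $(\alpha_1, \dots, \alpha_n)$ be a list in $A(Q) \setminus (Q \times \{0\})$ (i.e. $\alpha_i = (a_i, b_i)$ with $a_i > 0$ and $b_i > 0$ for all $i$). Then $\mathrm{Frob}(\alpha_1, \dots, \alpha_n) = \emptyset$.
   Context: $R$ is isomorphic to the ring of upper triangular $2\times 2$ matrices over $Q$ with constant diagonal, and is commutative. For a list $(\alpha_1,\dots,\alpha_n)$ in $A(Q)$, $MN(\alpha_1, \dots, \alpha_n) = \{\sum_{i=1}^n \alpha_i \lambda_i : \lambda_1, \dots, \lambda_n \in C(Q)\}$ (product in $R$), and $\mathrm{Frob}(\alpha_1, \dots, \alpha_n) = \{w \in R : w + U(Q) \subseteq MN(\alpha_1, \dots, \alpha_n)\}$, where $w + U(Q) = \{w + u : u \in U(Q)\}$. *)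

theory Defs
  imports Main "HOL.Real"
begin

definition subring_one :: "real set \<Rightarrow> bool" where
  "subring_one Q \<longleftrightarrow> 1 \<in> Q \<and> (\<forall>x\<in>Q. \<forall>y\<in>Q. x + y \<in> Q \<and> x - y \<in> Q \<and> x * y \<in> Q)"

definition Rcar :: "real set \<Rightarrow> (real \<times> real) set" where
  "Rcar Q = Q \<times> Q"

definition radd :: "real \<times> real \<Rightarrow> real \<times> real \<Rightarrow> real \<times> real" where
  "radd x y = (fst x + fst y, snd x + snd y)"

definition rmul :: "real \<times> real \<Rightarrow> real \<times> real \<Rightarrow> real \<times> real" where
  "rmul x y = (fst x * fst y, fst x * snd y + snd x * fst y)"

definition rzero :: "real \<times> real" where "rzero = (0, 0)"

definition Aset :: "real set \<Rightarrow> (real \<times> real) set" where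
  "Aset Q = {x \<in> Q. 0 < x} \<times> {x \<in> Q. 0 \<le> x}"

definition Cset :: "real set \<Rightarrow> (real \<times> real) set" where
  "Cset Q = {x \<in> Q. 0 \<le> x} \<times> {x \<in> Q. 0 \<le> x}"

definition Uset :: "real set \<Rightarrow> (real \<times> real) set" where
  "Uset Q = {x \<in> Q. 0 \<le> x} \<times> {x \<in> Q. 0 \<le> x}"

definition MN :: "real set \<Rightarrow> (real \<times> real) list \<Rightarrow> (real \<times> real) set" where
  "MN Q \<alpha>s = {foldr radd (map2 rmul \<alpha>s lams) rzero | lams.
      length lams = length \<alpha>s \<and> set lams \<subseteq> Cset Q}"

definition Frob :: "real set \<Rightarrow> (real \<times> real) list \<Rightarrow> (real \<times> real) set" where
  "Frob Q \<alpha>s = {w \<in> Rcar Q. (\<lambda>u. radd w u) ` Uset Q \<subseteq> MN Q \<alpha>s}"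

end

theory Submission
  imports Defs
begin

text \<open>
  If every generator \<open>(a\<^sub>i, b\<^sub>i)\<close> has \<open>a\<^sub>i, b\<^sub>i > 0\<close>, there is a slope \<open>m > 0\<close> with
  \<open>m a\<^sub>i \<le> b\<^sub>i\<close> for all \<open>i\<close>. The half-plane \<open>{(x, y). m x \<le> y}\<close> is closed under addition and
  under multiplication by elements of \<open>C(Q)\<close>, so it contains \<open>MN(\<alpha>\<^sub>1, \<dots>, \<alpha>\<^sub>n)\<close>. But for any
  \<open>w\<close>, the translates \<open>w + (k, 0) \<in> w + U(Q)\<close> leave this half-plane once \<open>k\<close> is large.
\<close>

definition slope_halfplane :: "real \<Rightarrow> (real \<times> real) set" where
  "slope_halfplane m = {x. m * fst x \<le> snd x}"

lemma rzero_in_slope_halfplane: "rzero \<in> slope_halfplane m"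
  by (simp add: slope_halfplane_def rzero_def)

lemma radd_in_slope_halfplane:
  assumes "x \<in> slope_halfplane m" "y \<in> slope_halfplane m"
  shows "radd x y \<in> slope_halfplane m"
  using assms by (simp add: slope_halfplane_def radd_def distrib_left)

lemma rmul_in_slope_halfplane:
  assumes "a \<in> slope_halfplane m" "0 \<le> fst a" "0 \<le> fst l" "0 \<le> snd l"
  shows "rmul a l \<in> slope_halfplane m"
proof -
  have "m * fst a * fst l \<le> snd a * fst l"
    using assms(1,3) by (simp add: slope_halfplane_def mult_right_mono)
  moreover have "0 \<le> fst a * snd l"
    using assms(2,4) by simp
  ultimately show ?thesis
    by (simp add: slope_halfplane_def rmul_def algebra_simps)
qed

lemma MN_subset_slope_halfplane:
  assumes "\<forall>a\<in>set \<alpha>s. 0 \<le> fst a \<and> a \<in> slope_halfplane m"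
  shows "MN Q \<alpha>s \<subseteq> slope_halfplane m"
proof -
  have "foldr radd (map2 rmul \<alpha>s lams) rzero \<in> slope_halfplane m"
    if "length lams = length \<alpha>s" "set lams \<subseteq> Cset Q" for lams
    using assms that
  proof (induction \<alpha>s arbitrary: lams)
    case Nil
    then show ?case by (simp add: rzero_in_slope_halfplane)
  next
    case (Cons a \<alpha>s)
    then obtain l ls where lams: "lams = l # ls"
      by (cases lams) auto
    have "rmul a l \<in> slope_halfplane m"
      using Cons.prems lams by (intro rmul_in_slope_halfplane) (auto simp: Cset_def)
    moreover have "foldr radd (map2 rmul \<alpha>s ls) rzero \<in> slope_halfplane m"
      using Cons.prems lams by (intro Cons.IH) auto
    ultimately show ?case
      by (simp add: lams radd_in_slope_halfplane)
  qed
  then show ?thesis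
    by (auto simp: MN_def)
qed

lemma exists_slope_halfplane:
  assumes "finite A" "\<forall>a\<in>A. 0 < fst a \<and> 0 < snd a"
  obtains m where "0 < m" "A \<subseteq> slope_halfplane m"
proof
  define m where "m = Min (insert 1 ((\<lambda>a. snd a / fst a) ` A))"
  show "0 < m"
    using assms by (simp add: m_def)
  show "A \<subseteq> slope_halfplane m"
  proof
    fix a assume "a \<in> A"
    then have "m \<le> snd a / fst a"
      using assms(1) by (simp add: m_def)
    then show "a \<in> slope_halfplane m"
      using assms(2) \<open>a \<in> A\<close> by (simp add: slope_halfplane_def pos_le_divide_eq)
  qed
qed

lemma translate_not_in_slope_halfplane:
  assumes "0 < m"
  obtains k :: nat where "radd w (real k, 0) \<notin> slope_halfplane m"
proof -
  obtain k :: nat where "(snd w - m * fst w) / m < real k"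
    using reals_Archimedean2 by blast
  then have "snd w < m * (fst w + real k)"
    using assms by (simp add: pos_divide_less_eq algebra_simps)
  then show ?thesis
    by (intro that[of k]) (simp add: slope_halfplane_def radd_def)
qed

lemma of_nat_in_subring_one:
  assumes "subring_one Q"
  shows "real k \<in> Q"
proof (induction k)
  case 0
  have "1 - 1 \<in> Q"
    using assms unfolding subring_one_def by blast
  then show ?case by simp
next
  case (Suc k)
  then have "real k + 1 \<in> Q"
    using assms unfolding subring_one_def by blast
  then show ?case by (simp add: add.commute)
qed

lemma Uset_contains_of_nat:
  assumes "subring_one Q"
  shows "(real k, 0) \<in> Uset Q"
  using of_nat_in_subring_one[OF assms, of k] of_nat_in_subring_one[OF assms, of 0]
  by (simp add: Uset_def)

theorem proposition4p1:
  fixes Q :: "real set" and \<alpha>s :: "(real \<times> real) list" and n :: nat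
  assumes "subring_one Q"
    and "n \<ge> 1" and "length \<alpha>s = n"
    and "set \<alpha>s \<subseteq> Aset Q - (Q \<times> {0})"
  shows "Frob Q \<alpha>s = {}"
proof -
  have positive: "\<forall>a\<in>set \<alpha>s. 0 < fst a \<and> 0 < snd a"
    using assms(4) by (force simp: Aset_def)
  then obtain m where "0 < m" and generators: "set \<alpha>s \<subseteq> slope_halfplane m"
    using exists_slope_halfplane[of "set \<alpha>s"] by auto
  have MN: "MN Q \<alpha>s \<subseteq> slope_halfplane m"
    using generators positive by (intro MN_subset_slope_halfplane) auto
  show ?thesis
  proof (rule equals0I)
    fix w assume "w \<in> Frob Q \<alpha>s"
    then have "radd w u \<in> MN Q \<alpha>s" if "u \<in> Uset Q" for u
      using that by (auto simp: Frob_def)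
    then have "radd w (real k, 0) \<in> slope_halfplane m" for k
      using MN Uset_contains_of_nat[OF assms(1)] by blast
    then show False
      using translate_not_in_slope_halfplane[OF \<open>0 < m\<close>] by metis
  qed
qed

end
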